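(* Let $p\geq 5$ and $p'=p+2$ both be prime, and put $a=\frac{p+1}{6}$. Then for every integer $n\geq 0$ the numbers $pp'(2n+1)\pm 4a$ are positive, and $$p[p'(2n+1)+4a]+4a=p'[p(2n+1)+4a]-4\tfrac{p'-1}{6}>0,$$ $$p[p'(2n+1)-4a]-4a=p'[p(2n+1)-4a]+4\tfrac{p'-1}{6}>0.$$ All these numbers are common non-ranks of $p$ and $p'$: each of them is a non-rank and can be written both as $kp\pm 4N(p/6)$ and as $k'p'\pm 4N(p'/6)$ with $k,k'$ positive odd integers.
   Context: $N(x)$ denotes the integer nearest to the real number $x$. An odd integer $t\geq 3$ is a twin-4 rank if $3t-2$ and $3t+2$ are both prime, and a non-rank otherwise. *)

theory Defs
  imports Complex_Main "HOL-Computational_Algebra.Primes"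
begin

text \<open>N(x): the integer nearest to x (ties rounded up; ties never occur in our use).\<close>
definition nearest_int :: "real \<Rightarrow> int" where
  "nearest_int x = \<lfloor>x + 1/2\<rfloor>"

definition twin4_rank :: "int \<Rightarrow> bool" where
  "twin4_rank t \<longleftrightarrow> odd t \<and> t \<ge> 3 \<and> prime (3*t - 2) \<and> prime (3*t + 2)"

definition non_rank :: "int \<Rightarrow> bool" where
  "non_rank t \<longleftrightarrow> odd t \<and> t \<ge> 3 \<and> \<not> twin4_rank t"

definition rep_form :: "int \<Rightarrow> int \<Rightarrow> bool" where
  "rep_form q X \<longleftrightarrow> (\<exists>k::int. k > 0 \<and> odd k \<and>
      (X = k*q + 4 * nearest_int (real_of_int q / 6) \<or> X = k*q - 4 * nearest_int (real_of_int q / 6)))"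

definition common_non_rank :: "int \<Rightarrow> int \<Rightarrow> int \<Rightarrow> bool" where
  "common_non_rank q q' X \<longleftrightarrow> non_rank X \<and> rep_form q X \<and> rep_form q' X"

end

theory Submission
  imports Defs
begin

text \<open>Twin primes p, p' = p + 2 \<ge> 5 are 6a - 1 and 6a + 1, so N(p/6) = N(p'/6) = a;
  primality is used for nothing else. A number X = kp + 4sa with s = \<plusminus>1 and k odd satisfies
  3X - 2s = p(3k + 2s), so 3X - 2s is composite once 3k + 2s > 1 and X is a non-rank.
  Each of the four numbers has this shape (k being p'm or p'm \<plusminus> 4a) and also the shape
  k'p' \<plusminus> 4a (k' being pm or pm \<plusminus> 4a), which makes it a common non-rank.\<close>

lemma not_prime_mult_int:
  fixes x y :: int
  assumes "x > 1" "y > 1"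
  shows "\<not> prime (x * y)"
proof
  assume "prime (x * y)"
  moreover have "x * y > x" using assms by simp
  ultimately show False
    using prime_int_not_dvd[of "x * y" x] assms(1) by simp
qed

lemma twin_prime_mod_6:
  fixes p :: int
  assumes "prime p" "p \<ge> 5" "prime (p + 2)"
  shows "p mod 6 = 5"
proof -
  have "\<not> 2 dvd p" "\<not> 3 dvd p" "\<not> 3 dvd p + 2"
    using assms prime_int_not_dvd by auto
  then show ?thesis by presburger
qed

lemma nearest_int_sixth:
  fixes a e :: int
  assumes "-3 \<le> e" "e < 3"
  shows "nearest_int (real_of_int (6 * a + e) / 6) = a"
  using assms unfolding nearest_int_def by (simp add: floor_eq_iff field_simps)

lemma rep_form_near_multiple_of_6:
  assumes "q = 6 * a + e" "-3 \<le> e" "e < 3" "k > 0" "odd k"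
    and "X = k * q + 4 * a \<or> X = k * q - 4 * a"
  shows "rep_form q X"
  unfolding rep_form_def using assms nearest_int_sixth[of e a] by auto

lemma non_rank_if_multiple:
  fixes X :: int
  assumes "odd X" "X \<ge> 3" "p > 1" "c > 1" "3 * X - 2 = p * c \<or> 3 * X + 2 = p * c"
  shows "non_rank X"
  using assms not_prime_mult_int[of p c] unfolding non_rank_def twin4_rank_def by auto

lemma non_rank_mult_plus_4a:
  fixes a k :: int
  assumes "p = 6 * a - 1" "a \<ge> 1" "odd k" "k > 0"
  shows "non_rank (p * k + 4 * a)"
proof (rule non_rank_if_multiple)
  show "3 * (p * k + 4 * a) - 2 = p * (3 * k + 2) \<or> 3 * (p * k + 4 * a) + 2 = p * (3 * k + 2)"
    using assms(1) by (simp add: algebra_simps)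
  have "p * k \<ge> p" using assms by simp
  then show "p * k + 4 * a \<ge> 3" using assms by linarith
qed (use assms in auto)

lemma non_rank_mult_minus_4a:
  fixes a k :: int
  assumes "p = 6 * a - 1" "a \<ge> 1" "odd k" "k \<ge> 3"
  shows "non_rank (p * k - 4 * a)"
proof (rule non_rank_if_multiple)
  show "3 * (p * k - 4 * a) - 2 = p * (3 * k - 2) \<or> 3 * (p * k - 4 * a) + 2 = p * (3 * k - 2)"
    using assms(1) by (simp add: algebra_simps)
  have "p * k \<ge> p * 3" using assms by (intro mult_left_mono) auto
  then show "p * k - 4 * a \<ge> 3" using assms by linarith
qed (use assms in auto)

lemma common_non_ranks_6a_pm_1:
  fixes a m :: int
  assumes p: "p = 6 * a - 1" and p': "p' = 6 * a + 1" and a: "a \<ge> 1" and m: "m > 0" "odd m"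
  shows "common_non_rank p p' (p * p' * m + 4 * a)"
    and "common_non_rank p p' (p * p' * m - 4 * a)"
    and "common_non_rank p p' (p * (p' * m + 4 * a) + 4 * a)"
    and "common_non_rank p p' (p * (p' * m - 4 * a) - 4 * a)"
    and "p * (p' * m + 4 * a) + 4 * a = p' * (p * m + 4 * a) - 4 * a"
    and "p * (p' * m - 4 * a) - 4 * a = p' * (p * m - 4 * a) + 4 * a"
proof -
  have p_rep: "rep_form p X" if "k > 0" "odd k" "X = k * p + 4 * a \<or> X = k * p - 4 * a" for k X
    using rep_form_near_multiple_of_6[of p a "-1"] p that by simp
  have p'_rep: "rep_form p' X" if "k > 0" "odd k" "X = k * p' + 4 * a \<or> X = k * p' - 4 * a" for k X
    using rep_form_near_multiple_of_6[OF p'] that by simp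
  have "odd p" "odd p'" using p p' by presburger+
  then have odd: "odd (p * m)" "odd (p' * m)" "odd (p * m + 4 * a)" "odd (p * m - 4 * a)"
    "odd (p' * m + 4 * a)" "odd (p' * m - 4 * a)"
    using m by simp_all
  have "p * m \<ge> p" "p' * m \<ge> p'" using m p p' a by simp_all
  then have bounds: "p * m - 4 * a > 0" "p' * m - 4 * a \<ge> 3" "p * m > 0" "p' * m \<ge> 3"
    using p p' a by linarith+
  note simps = common_non_rank_def mult.assoc algebra_simps
  show "common_non_rank p p' (p * p' * m + 4 * a)"
    using non_rank_mult_plus_4a[OF p a odd(2)] p_rep[of "p' * m"] p'_rep[of "p * m"] odd bounds
    by (simp add: simps)
  show "common_non_rank p p' (p * p' * m - 4 * a)"
    using non_rank_mult_minus_4a[OF p a odd(2)] p_rep[of "p' * m"] p'_rep[of "p * m"] odd bounds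
    by (simp add: simps)
  show "p * (p' * m + 4 * a) + 4 * a = p' * (p * m + 4 * a) - 4 * a"
    unfolding p p' by (simp add: algebra_simps)
  with odd bounds show "common_non_rank p p' (p * (p' * m + 4 * a) + 4 * a)"
    using non_rank_mult_plus_4a[OF p a odd(5)] p_rep[of "p' * m + 4 * a"] p'_rep[of "p * m + 4 * a"] a
    by (simp add: simps)
  show "p * (p' * m - 4 * a) - 4 * a = p' * (p * m - 4 * a) + 4 * a"
    unfolding p p' by (simp add: algebra_simps)
  with odd bounds show "common_non_rank p p' (p * (p' * m - 4 * a) - 4 * a)"
    using non_rank_mult_minus_4a[OF p a odd(6)] p_rep[of "p' * m - 4 * a"] p'_rep[of "p * m - 4 * a"]
    by (simp add: simps)
qed

lemma common_non_rank_pos: "common_non_rank q q' X \<Longrightarrow> X > 0"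
  by (simp add: common_non_rank_def non_rank_def)

theorem theorem3p8:
  fixes p :: int and n :: nat
  assumes "prime p" and "p \<ge> 5" and "prime (p + 2)"
  shows "let p' = p + 2; a = (p + 1) div 6; m = 2 * int n + 1 in
     p * p' * m + 4 * a > 0 \<and> p * p' * m - 4 * a > 0 \<and>
     p * (p' * m + 4 * a) + 4 * a = p' * (p * m + 4 * a) - 4 * ((p' - 1) div 6) \<and>
     p * (p' * m + 4 * a) + 4 * a > 0 \<and>
     p * (p' * m - 4 * a) - 4 * a = p' * (p * m - 4 * a) + 4 * ((p' - 1) div 6) \<and>
     p * (p' * m - 4 * a) - 4 * a > 0 \<and>
     common_non_rank p p' (p * p' * m + 4 * a) \<and>
     common_non_rank p p' (p * p' * m - 4 * a) \<and>
     common_non_rank p p' (p * (p' * m + 4 * a) + 4 * a) \<and>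
     common_non_rank p p' (p * (p' * m - 4 * a) - 4 * a)"
proof -
  define a where "a = (p + 1) div 6"
  define m where "m = 2 * int n + 1"
  have p: "p = 6 * a - 1" and p': "p + 2 = 6 * a + 1" and "(p + 2 - 1) div 6 = a"
    using twin_prime_mod_6[OF assms] unfolding a_def by presburger+
  have a: "a \<ge> 1" using p assms(2) by linarith
  have m: "m > 0" "odd m" unfolding m_def by simp_all
  note X = common_non_ranks_6a_pm_1[OF p p' a m]
  show ?thesis
    unfolding Let_def a_def[symmetric] m_def[symmetric] \<open>(p + 2 - 1) div 6 = a\<close>
    using X common_non_rank_pos[OF X(1)] common_non_rank_pos[OF X(2)]
      common_non_rank_pos[OF X(3)] common_non_rank_pos[OF X(4)] by blast
qed

end
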